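(* Let $G$ be a unit square graph with $V(G)\neq\emptyset$. Then there is a vertex $v\in V(G)$ such that $G[N[v]]$ is a unit interval graph.
   Context: A unit square graph is a graph $G$ admitting $f\colon V(G)\to\mathbb{R}^2$ with $vw\in E(G)$ iff $\|f(v)-f(w)\|_\infty\le1$ for distinct $v,w$. $N[v]=N(v)\cup\{v\}$ is the closed neighborhood. A unit interval graph is an intersection graph of unit-length intervals on the real line. *)

theory Defs
  imports "HOL-Analysis.Analysis"
begin

definition simple_graph :: "'a set \<Rightarrow> ('a \<Rightarrow> 'a \<Rightarrow> bool) \<Rightarrow> bool" where
  "simple_graph V E \<longleftrightarrow> finite V \<and> (\<forall>v w. E v w \<longrightarrow> v \<in> V \<and> w \<in> V \<and> v \<noteq> w \<and> E w v)"

definition unit_square_graph :: "'a set \<Rightarrow> ('a \<Rightarrow> 'a \<Rightarrow> bool) \<Rightarrow> bool" where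
  "unit_square_graph V E \<longleftrightarrow>
     (\<exists>f :: 'a \<Rightarrow> real^2. \<forall>v\<in>V. \<forall>w\<in>V. v \<noteq> w \<longrightarrow> (E v w \<longleftrightarrow> infnorm (f v - f w) \<le> 1))"

definition unit_interval_graph :: "'a set \<Rightarrow> ('a \<Rightarrow> 'a \<Rightarrow> bool) \<Rightarrow> bool" where
  "unit_interval_graph V E \<longleftrightarrow>
     (\<exists>l :: 'a \<Rightarrow> real. \<forall>v\<in>V. \<forall>w\<in>V. v \<noteq> w \<longrightarrow>
        (E v w \<longleftrightarrow> {l v..l v + 1} \<inter> {l w..l w + 1} \<noteq> {}))"

definition closed_nbhd :: "'a set \<Rightarrow> ('a \<Rightarrow> 'a \<Rightarrow> bool) \<Rightarrow> 'a \<Rightarrow> 'a set" where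
  "closed_nbhd V E v = {w \<in> V. E v w} \<union> {v}"

definition induced_edges :: "('a \<Rightarrow> 'a \<Rightarrow> bool) \<Rightarrow> 'a set \<Rightarrow> 'a \<Rightarrow> 'a \<Rightarrow> bool" where
  "induced_edges E S v w \<longleftrightarrow> v \<in> S \<and> w \<in> S \<and> E v w"

end

theory Submission
  imports Defs
begin

text \<open>Take a vertex v whose point f v has the least first coordinate. Every vertex of N[v] then
  lies in the vertical strip of width 1 starting at f v, so inside N[v] the sup-norm condition
  only constrains the second coordinates, and these give a unit interval representation.\<close>

lemma infnorm_le_1_iff_2:
  "infnorm (z::real^2) \<le> 1 \<longleftrightarrow> \<bar>z$1\<bar> \<le> 1 \<and> \<bar>z$2\<bar> \<le> 1"
proof -
  have "infnorm z \<le> 1 \<longleftrightarrow> (\<forall>i\<in>Basis. \<bar>z \<bullet> i\<bar> \<le> 1)"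
    unfolding infnorm_Max by (simp add: Max_le_iff)
  also have "\<dots> \<longleftrightarrow> (\<forall>k::2. \<bar>z $ k\<bar> \<le> 1)"
    by (auto simp: Basis_vec_def inner_axis)
  also have "\<dots> \<longleftrightarrow> \<bar>z$1\<bar> \<le> 1 \<and> \<bar>z$2\<bar> \<le> 1"
    by (metis exhaust_2)
  finally show ?thesis .
qed

lemma unit_intervals_intersect_iff:
  "{a..a+1} \<inter> {b..b+1::real} \<noteq> {} \<longleftrightarrow> \<bar>a - b\<bar> \<le> 1"
proof
  assume "{a..a+1} \<inter> {b..b+1::real} \<noteq> {}"
  then show "\<bar>a - b\<bar> \<le> 1" by auto
next
  assume "\<bar>a - b\<bar> \<le> 1"
  then have "max a b \<in> {a..a+1} \<inter> {b..b+1}" by auto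
  then show "{a..a+1} \<inter> {b..b+1::real} \<noteq> {}" by blast
qed

lemma unit_interval_graph_if_in_strip:
  fixes f :: "'a \<Rightarrow> real^2"
  assumes square: "\<And>u w. u \<in> S \<Longrightarrow> w \<in> S \<Longrightarrow> u \<noteq> w \<Longrightarrow> E u w \<longleftrightarrow> infnorm (f u - f w) \<le> 1"
    and strip: "\<And>u w. u \<in> S \<Longrightarrow> w \<in> S \<Longrightarrow> \<bar>f u $ 1 - f w $ 1\<bar> \<le> 1"
  shows "unit_interval_graph S (induced_edges E S)"
  unfolding unit_interval_graph_def
proof (intro exI[of _ "\<lambda>u. f u $ 2"] ballI impI)
  fix u w assume u: "u \<in> S" and w: "w \<in> S" and "u \<noteq> w"
  then have "induced_edges E S u w \<longleftrightarrow> infnorm (f u - f w) \<le> 1"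
    using square by (simp add: induced_edges_def)
  also have "\<dots> \<longleftrightarrow> \<bar>f u $ 2 - f w $ 2\<bar> \<le> 1"
    using strip[OF u w] by (simp add: infnorm_le_1_iff_2)
  finally show "induced_edges E S u w \<longleftrightarrow> {f u $ 2..f u $ 2 + 1} \<inter> {f w $ 2..f w $ 2 + 1} \<noteq> {}"
    by (simp only: unit_intervals_intersect_iff)
qed

lemma closed_nbhd_subset:
  assumes "simple_graph V E" and "v \<in> V"
  shows "closed_nbhd V E v \<subseteq> V"
  using assms by (auto simp: closed_nbhd_def)

lemma closed_nbhd_of_leftmost_in_strip:
  fixes f :: "'a \<Rightarrow> real^2"
  assumes "simple_graph V E"
    and square: "\<And>u w. u \<in> V \<Longrightarrow> w \<in> V \<Longrightarrow> u \<noteq> w \<Longrightarrow> E u w \<longleftrightarrow> infnorm (f u - f w) \<le> 1"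
    and "v \<in> V" and leftmost: "\<And>u. u \<in> V \<Longrightarrow> f v $ 1 \<le> f u $ 1"
    and "u \<in> closed_nbhd V E v"
  shows "f v $ 1 \<le> f u $ 1 \<and> f u $ 1 \<le> f v $ 1 + 1"
proof (cases "u = v")
  case False
  with assms(1,5) have "u \<in> V" "E v u"
    by (auto simp: closed_nbhd_def simple_graph_def)
  with square[of v u] \<open>v \<in> V\<close> False have "\<bar>f v $ 1 - f u $ 1\<bar> \<le> 1"
    by (simp add: infnorm_le_1_iff_2)
  with leftmost[OF \<open>u \<in> V\<close>] show ?thesis by linarith
qed simp

theorem mainTheorem5:
  fixes V :: "'a set" and E :: "'a \<Rightarrow> 'a \<Rightarrow> bool"
  assumes "simple_graph V E"
    and "unit_square_graph V E"
    and "V \<noteq> {}"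
  shows "\<exists>v\<in>V. unit_interval_graph (closed_nbhd V E v) (induced_edges E (closed_nbhd V E v))"
proof -
  obtain f :: "'a \<Rightarrow> real^2"
    where square: "\<And>u w. u \<in> V \<Longrightarrow> w \<in> V \<Longrightarrow> u \<noteq> w \<Longrightarrow> E u w \<longleftrightarrow> infnorm (f u - f w) \<le> 1"
    using assms(2) unfolding unit_square_graph_def by blast
  have "finite V"
    using assms(1) by (simp add: simple_graph_def)
  then obtain v where "v \<in> V" and leftmost: "\<And>u. u \<in> V \<Longrightarrow> f v $ 1 \<le> f u $ 1"
    using arg_min_if_finite[OF _ assms(3), of "\<lambda>u. f u $ 1"] by (meson not_le)
  let ?N = "closed_nbhd V E v"
  have bounds: "f v $ 1 \<le> f u $ 1 \<and> f u $ 1 \<le> f v $ 1 + 1" if "u \<in> ?N" for u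
    using assms(1) square \<open>v \<in> V\<close> leftmost that by (rule closed_nbhd_of_leftmost_in_strip)
  have "\<bar>f u $ 1 - f w $ 1\<bar> \<le> 1" if "u \<in> ?N" "w \<in> ?N" for u w
    using bounds[OF that(1)] bounds[OF that(2)] by linarith
  moreover have "?N \<subseteq> V"
    using assms(1) \<open>v \<in> V\<close> by (rule closed_nbhd_subset)
  ultimately have "unit_interval_graph ?N (induced_edges E ?N)"
    using square by (intro unit_interval_graph_if_in_strip[where f = f]) blast+
  with \<open>v \<in> V\<close> show ?thesis by blast
qed

end
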